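(* Let $S$ be a finitely generated semigroup and let $A$ and $B$ be finite generating sets for $S$. Then $\Omega\Gamma_r(S,A)$ is isomorphic, as a partially ordered set, to $\Omega\Gamma_r(S,B)$.
   Context: A digraph on a set $\Omega$ is a subset $\Gamma\subseteq\Omega\times\Omega$. A path is a finite or infinite sequence of pairwise distinct vertices $(v_0,v_1,\ldots)$ with $(v_i,v_{i+1})\in\Gamma$ for all $i$ (a single vertex is a path of length 0); a ray is an infinite path; an anti-ray is an infinite sequence of pairwise distinct vertices with $(v_{i+1},v_i)\in\Gamma$ for all $i$. For infinite $\Sigma',\Sigma\subseteq\Omega$, write $\Sigma'\preccurlyeq\Sigma$ if there are infinitely many pairwise vertex-disjoint paths each with initial vertex in $\Sigma'$ and final vertex in $\Sigma$. Restricted to rays and anti-rays of $\Gamma$ (identified with their vertex sets), $\preccurlyeq$ is a preorder; $\mathbf{r}\approx\mathbf{r}'$ iff $\mathbf{r}\preccurlyeq\mathbf{r}'$ and $\mathbf{r}'\preccurlyeq\mathbf{r}$. The ends of $\Gamma$ are the $\approx$-classes of rays and anti-rays, and $\Omega\Gamma$ is the set of ends partially ordered by the order induced by $\preccurlyeq$. The right Cayley graph $\Gamma_r(S,A)$ is the digraph on $S$ with edges $(x,xa)$, $x\in S$, $a\in A$. *)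

theory Defs
  imports Main
begin

definition is_path :: "('v \<times> 'v) set \<Rightarrow> 'v list \<Rightarrow> bool" where
  "is_path \<Gamma> p \<longleftrightarrow> p \<noteq> [] \<and> distinct p \<and> (\<forall>i. Suc i < length p \<longrightarrow> (p ! i, p ! Suc i) \<in> \<Gamma>)"

definition is_ray :: "('v \<times> 'v) set \<Rightarrow> (nat \<Rightarrow> 'v) \<Rightarrow> bool" where
  "is_ray \<Gamma> r \<longleftrightarrow> inj r \<and> (\<forall>i. (r i, r (Suc i)) \<in> \<Gamma>)"

definition is_antiray :: "('v \<times> 'v) set \<Rightarrow> (nat \<Rightarrow> 'v) \<Rightarrow> bool" where
  "is_antiray \<Gamma> r \<longleftrightarrow> inj r \<and> (\<forall>i. (r (Suc i), r i) \<in> \<Gamma>)"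

definition reach_le :: "('v \<times> 'v) set \<Rightarrow> 'v set \<Rightarrow> 'v set \<Rightarrow> bool" where
  "reach_le \<Gamma> X Y \<longleftrightarrow> (\<exists>P. infinite P \<and>
      (\<forall>p\<in>P. is_path \<Gamma> p \<and> hd p \<in> X \<and> last p \<in> Y) \<and>
      (\<forall>p\<in>P. \<forall>q\<in>P. p \<noteq> q \<longrightarrow> set p \<inter> set q = {}))"

definition ray_sets :: "('v \<times> 'v) set \<Rightarrow> 'v set set" where
  "ray_sets \<Gamma> = {range r | r. is_ray \<Gamma> r \<or> is_antiray \<Gamma> r}"

definition end_equiv :: "('v \<times> 'v) set \<Rightarrow> 'v set \<Rightarrow> 'v set \<Rightarrow> bool" where
  "end_equiv \<Gamma> X Y \<longleftrightarrow> reach_le \<Gamma> X Y \<and> reach_le \<Gamma> Y X"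

definition ends :: "('v \<times> 'v) set \<Rightarrow> 'v set set set" where
  "ends \<Gamma> = (\<lambda>X. {Y \<in> ray_sets \<Gamma>. end_equiv \<Gamma> X Y}) ` ray_sets \<Gamma>"

definition end_le :: "('v \<times> 'v) set \<Rightarrow> 'v set set \<Rightarrow> 'v set set \<Rightarrow> bool" where
  "end_le \<Gamma> E F \<longleftrightarrow> (\<exists>X\<in>E. \<exists>Y\<in>F. reach_le \<Gamma> X Y)"

definition end_poset_iso :: "('v \<times> 'v) set \<Rightarrow> ('w \<times> 'w) set \<Rightarrow> bool" where
  "end_poset_iso \<Gamma> \<Delta> \<longleftrightarrow> (\<exists>f. bij_betw f (ends \<Gamma>) (ends \<Delta>) \<and>
      (\<forall>E\<in>ends \<Gamma>. \<forall>F\<in>ends \<Gamma>. end_le \<Gamma> E F \<longleftrightarrow> end_le \<Delta> (f E) (f F)))"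

text \<open>Right Cayley graph of the semigroup (the whole type) with respect to A.\<close>
definition cayley_r :: "'a::semigroup_mult set \<Rightarrow> ('a \<times> 'a) set" where
  "cayley_r A = {(x, x * a) | x a. a \<in> A}"

inductive_set sgen :: "'a::semigroup_mult set \<Rightarrow> 'a set" for A where
  base: "a \<in> A \<Longrightarrow> a \<in> sgen A"
| mult: "x \<in> sgen A \<Longrightarrow> y \<in> sgen A \<Longrightarrow> x * y \<in> sgen A"

end

theory Submission
  imports Defs "HOL-Library.Infinite_Set" "HOL-Library.Sublist"
begin

text \<open>\<open>\<Sigma>' \<preccurlyeq> \<Sigma>\<close> holds iff for every finite set \<open>F\<close> some vertex of \<open>\<Sigma>' - F\<close> reaches
  a vertex of \<open>\<Sigma> - F\<close> along a path avoiding \<open>F\<close>; infinitely many disjoint paths can then be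
  picked greedily. If \<open>A\<close> and \<open>B\<close> both generate \<open>S\<close>, replacing each edge \<open>(x, x a)\<close> of
  \<open>\<Gamma>\<^sub>r(S, A)\<close> by the walk spelling a \<open>B\<close>-word for \<open>a\<close> shows that this local condition,
  hence \<open>\<preccurlyeq>\<close>, is the same for both Cayley graphs. Expanding a ray (anti-ray) of one graph
  in the same way gives a walk of the other that visits every vertex finitely often, and a ray
  (anti-ray) extracted from that walk is \<open>\<approx>\<close>-equivalent to the original one. So both end posets
  are quotients of mutually cofinal families of rays by one and the same preorder.\<close>

section \<open>Reachability avoiding finite sets\<close>

lemma is_path_iff_successively:
  "is_path G p \<longleftrightarrow> p \<noteq> [] \<and> distinct p \<and> successively (\<lambda>x y. (x, y) \<in> G) p"
  by (simp add: is_path_def successively_conv_nth)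

lemma rtrancl_Restr_if_successively:
  assumes "successively (\<lambda>x y. (x, y) \<in> G) p" "p \<noteq> []" "set p \<subseteq> S"
  shows "(hd p, last p) \<in> (Restr G S)\<^sup>*"
  using assms
proof (induction p)
  case (Cons x p)
  then show ?case
    by (cases p) (auto simp: successively_Cons intro: converse_rtrancl_into_rtrancl)
qed simp

lemma is_path_if_rtrancl_Restr:
  assumes "(x, z) \<in> (Restr G S)\<^sup>*" "z \<in> S"
  shows "\<exists>p. is_path G p \<and> hd p = x \<and> last p = z \<and> set p \<subseteq> S"
  using assms
proof (induction rule: converse_rtrancl_induct)
  case base
  show ?case using \<open>z \<in> S\<close> by (intro exI[of _ "[z]"]) (simp add: is_path_def)
next
  case (step x y)
  then obtain p where p: "is_path G p" "hd p = y" "last p = z" "set p \<subseteq> S" by blast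
  show ?case
  proof (cases "x \<in> set p")
    case True
    then obtain ys zs where "p = ys @ x # zs" by (meson split_list)
    with p show ?thesis
      by (intro exI[of _ "x # zs"]) (auto simp: is_path_iff_successively successively_append_iff)
  next
    case False
    with p step.hyps show ?thesis
      by (intro exI[of _ "x # p"]) (auto simp: is_path_iff_successively successively_Cons)
  qed
qed

lemma reach_le_avoiding:
  assumes "reach_le G X Y" "finite F"
  shows "\<exists>p. is_path G p \<and> hd p \<in> X \<and> last p \<in> Y \<and> set p \<inter> F = {}"
proof -
  obtain P where P: "infinite P" "\<forall>p\<in>P. is_path G p \<and> hd p \<in> X \<and> last p \<in> Y"
    and disj: "\<forall>p\<in>P. \<forall>q\<in>P. p \<noteq> q \<longrightarrow> set p \<inter> set q = {}"
    using assms(1) unfolding reach_le_def by blast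
  have "finite {p \<in> P. x \<in> set p}" for x
  proof (cases "{p \<in> P. x \<in> set p} = {}")
    case False
    then obtain p where "p \<in> P" "x \<in> set p" by blast
    then have "q = p" if "q \<in> P" "x \<in> set q" for q using disj that by blast
    then have "{p \<in> P. x \<in> set p} \<subseteq> {p}" by blast
    then show ?thesis by (rule finite_subset) simp
  qed (metis finite.emptyI)
  then have "finite (\<Union>x\<in>F. {p \<in> P. x \<in> set p})" using assms(2) by simp
  moreover have "{p \<in> P. set p \<inter> F \<noteq> {}} \<subseteq> (\<Union>x\<in>F. {p \<in> P. x \<in> set p})" by blast
  ultimately have "finite {p \<in> P. set p \<inter> F \<noteq> {}}" by (rule finite_subset[rotated])
  then have "infinite (P - {p \<in> P. set p \<inter> F \<noteq> {}})" using P(1) by (rule Diff_infinite_finite)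
  then obtain p where "p \<in> P - {p \<in> P. set p \<inter> F \<noteq> {}}" using infinite_imp_nonempty by blast
  with P(2) show ?thesis by blast
qed

text \<open>The paths are chosen one after another, each avoiding the vertices of all previous ones.\<close>
lemma reach_le_if_avoiding:
  assumes "\<And>F. finite F \<Longrightarrow> \<exists>p. is_path G p \<and> hd p \<in> X \<and> last p \<in> Y \<and> set p \<inter> F = {}"
  shows "reach_le G X Y"
proof -
  define ok where "ok V p \<longleftrightarrow> is_path G p \<and> hd p \<in> X \<and> last p \<in> Y \<and> set p \<inter> V = {}" for V p
  define pick where "pick V = (SOME p. ok V p)" for V
  define U where "U = rec_nat {} (\<lambda>_ V. V \<union> set (pick V))"
  have U_0: "U 0 = {}" and U_Suc: "U (Suc n) = U n \<union> set (pick (U n))" for n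
    by (simp_all add: U_def)
  have "finite (U n)" for n by (induction n) (simp_all add: U_0 U_Suc)
  then have "\<exists>p. ok (U n) p" for n using assms unfolding ok_def by blast
  then have ok_pick: "ok (U n) (pick (U n))" for n unfolding pick_def by (rule someI_ex)
  have U_mono: "U m \<subseteq> U n" if "m \<le> n" for m n
    using that by (induction n) (auto simp: U_Suc le_Suc_eq)
  have disj: "set (pick (U m)) \<inter> set (pick (U n)) = {}" if "m < n" for m n
  proof -
    have "set (pick (U m)) \<subseteq> U n" using U_mono[of "Suc m" n] that U_Suc by auto
    then show ?thesis using ok_pick[of n] unfolding ok_def by blast
  qed
  have ne: "pick (U n) \<noteq> []" for n using ok_pick[of n] by (simp add: ok_def is_path_def)
  have inj: "inj (\<lambda>n. pick (U n))"
  proof (rule linorder_injI)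
    fix m n :: nat assume "m < n"
    then show "pick (U m) \<noteq> pick (U n)" using disj[of m n] ne[of m] by auto
  qed
  have "set (pick (U m)) \<inter> set (pick (U n)) = {}" if "pick (U m) \<noteq> pick (U n)" for m n
    using that disj[of m n] disj[of n m] by (cases m n rule: linorder_cases) auto
  then show ?thesis unfolding reach_le_def
    using ok_pick inj unfolding ok_def
    by (intro exI[of _ "range (\<lambda>n. pick (U n))"] conjI) (auto simp: range_inj_infinite)
qed

lemma reach_le_iff_rtrancl:
  "reach_le G X Y \<longleftrightarrow> (\<forall>F. finite F \<longrightarrow> (\<exists>x\<in>X - F. \<exists>y\<in>Y - F. (x, y) \<in> (Restr G (- F))\<^sup>*))"
proof
  assume "reach_le G X Y"
  show "\<forall>F. finite F \<longrightarrow> (\<exists>x\<in>X - F. \<exists>y\<in>Y - F. (x, y) \<in> (Restr G (- F))\<^sup>*)"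
  proof (intro allI impI)
    fix F :: "'a set" assume "finite F"
    then obtain p where p: "is_path G p" "hd p \<in> X" "last p \<in> Y" "set p \<inter> F = {}"
      using reach_le_avoiding \<open>reach_le G X Y\<close> by blast
    then have "p \<noteq> []" "successively (\<lambda>x y. (x, y) \<in> G) p"
      by (simp_all add: is_path_iff_successively)
    then have "(hd p, last p) \<in> (Restr G (- F))\<^sup>*"
      using p(4) by (intro rtrancl_Restr_if_successively) auto
    moreover have "hd p \<notin> F" "last p \<notin> F" using p(4) \<open>p \<noteq> []\<close> hd_in_set last_in_set by blast+
    ultimately show "\<exists>x\<in>X - F. \<exists>y\<in>Y - F. (x, y) \<in> (Restr G (- F))\<^sup>*"
      using p(2,3) by blast
  qed
next
  assume "\<forall>F. finite F \<longrightarrow> (\<exists>x\<in>X - F. \<exists>y\<in>Y - F. (x, y) \<in> (Restr G (- F))\<^sup>*)"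
  then show "reach_le G X Y"
    by (intro reach_le_if_avoiding) (fastforce dest: is_path_if_rtrancl_Restr)
qed

lemma reach_le_rtranclE:
  assumes "reach_le G X Y" "finite F"
  obtains x y where "x \<in> X" "x \<notin> F" "y \<in> Y" "y \<notin> F" "(x, y) \<in> (Restr G (- F))\<^sup>*"
  using assms unfolding reach_le_iff_rtrancl by blast

lemma reach_le_converseI:
  assumes "reach_le G X Y"
  shows "reach_le (G\<inverse>) Y X"
  unfolding reach_le_iff_rtrancl
proof (intro allI impI)
  fix F :: "'a set" assume "finite F"
  then obtain x y where "x \<in> X" "x \<notin> F" "y \<in> Y" "y \<notin> F" "(x, y) \<in> (Restr G (- F))\<^sup>*"
    by (rule reach_le_rtranclE[OF assms])
  moreover have "(Restr G (- F))\<inverse> = Restr (G\<inverse>) (- F)" by blast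
  ultimately have "(y, x) \<in> (Restr (G\<inverse>) (- F))\<^sup>*" by (metis converseI rtrancl_converse)
  with \<open>x \<in> X\<close> \<open>x \<notin> F\<close> \<open>y \<in> Y\<close> \<open>y \<notin> F\<close>
  show "\<exists>y\<in>Y - F. \<exists>x\<in>X - F. (y, x) \<in> (Restr (G\<inverse>) (- F))\<^sup>*"
    by (intro bexI[of _ y] bexI[of _ x]) simp_all
qed

lemma reach_le_converse: "reach_le (G\<inverse>) Y X \<longleftrightarrow> reach_le G X Y"
  using reach_le_converseI[of G X Y] reach_le_converseI[of "G\<inverse>" Y X] by auto

lemma reach_le_refl:
  assumes "infinite X"
  shows "reach_le G X X"
  unfolding reach_le_iff_rtrancl
proof (intro allI impI)
  fix F :: "'a set" assume "finite F"
  then obtain x where "x \<in> X - F" using assms infinite_imp_nonempty Diff_infinite_finite by blast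
  then show "\<exists>x\<in>X - F. \<exists>y\<in>X - F. (x, y) \<in> (Restr G (- F))\<^sup>*"
    by (intro bexI[of _ x] bexI[of _ x]) simp_all
qed

lemma finite_fibres_eventually_notin:
  fixes w :: "nat \<Rightarrow> 'a"
  assumes "\<And>x. finite {j. w j = x}" "finite F"
  shows "\<exists>N. \<forall>j\<ge>N. w j \<notin> F"
proof -
  have "{j. w j \<in> F} = (\<Union>x\<in>F. {j. w j = x})" by auto
  then have "finite {j. w j \<in> F}" using assms by (simp only: finite_UN_I)
  from finite_nat_bounded[OF this] obtain N where N: "{j. w j \<in> F} \<subseteq> {..<N}" ..
  have "w j \<notin> F" if "N \<le> j" for j
    using that N by (meson leD lessThan_iff mem_Collect_eq subsetD)
  then show ?thesis by blast
qed

lemma finite_fibres_if_inj: "inj w \<Longrightarrow> finite {j. w j = x}"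
  using finite_vimageI[of "{x}" w] by (simp add: vimage_def)

lemma rtrancl_Restr_walk:
  assumes "\<And>j. (w j, w (Suc j)) \<in> G" "\<And>j. m \<le> j \<Longrightarrow> w j \<in> S" "m \<le> n"
  shows "(w m, w n) \<in> (Restr G S)\<^sup>*"
  using assms(3)
proof (induction n rule: dec_induct)
  case (step n)
  then show ?case using assms(1,2) by (auto intro: rtrancl_into_rtrancl)
qed simp

text \<open>A walk visiting each vertex only finitely often eventually leaves every finite set for
  good.\<close>
lemma reach_le_walk:
  assumes walk: "\<And>j. (w j, w (Suc j)) \<in> G" and fibres: "\<And>x. finite {j. w j = x}"
    and "infinite I" "infinite J"
  shows "reach_le G (w ` I) (w ` J)"
  unfolding reach_le_iff_rtrancl
proof (intro allI impI)
  fix F :: "'a set" assume "finite F"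
  then obtain N where N: "\<forall>j\<ge>N. w j \<notin> F"
    using finite_fibres_eventually_notin[OF fibres] by blast
  obtain m where m: "m \<in> I" "N \<le> m"
    using \<open>infinite I\<close> unfolding infinite_nat_iff_unbounded_le by blast
  obtain n where n: "n \<in> J" "m \<le> n"
    using \<open>infinite J\<close> unfolding infinite_nat_iff_unbounded_le by blast
  have "(w m, w n) \<in> (Restr G (- F))\<^sup>*"
    using m n N by (intro rtrancl_Restr_walk[where w=w, OF walk]) auto
  moreover have "w m \<in> w ` I - F" "w n \<in> w ` J - F" using m n N by auto
  ultimately show "\<exists>x\<in>w ` I - F. \<exists>y\<in>w ` J - F. (x, y) \<in> (Restr G (- F))\<^sup>*"
    by blast
qed

text \<open>Avoiding an initial segment of the ray forces the first path to enter it late, and then the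
  second path to leave it even later; the piece of the ray in between joins them.\<close>
lemma reach_le_trans_ray:
  assumes ray: "is_ray G r" and XR: "reach_le G X (range r)" and RZ: "reach_le G (range r) Z"
  shows "reach_le G X Z"
  unfolding reach_le_iff_rtrancl
proof (intro allI impI)
  fix F :: "'a set" assume "finite F"
  have walk: "\<And>j. (r j, r (Suc j)) \<in> G" and "inj r" using ray by (simp_all add: is_ray_def)
  then obtain N where N: "\<forall>j\<ge>N. r j \<notin> F"
    using finite_fibres_eventually_notin[OF finite_fibres_if_inj \<open>finite F\<close>] by blast
  have mono: "(Restr G (- (F \<union> K)))\<^sup>* \<subseteq> (Restr G (- F))\<^sup>*" for K by (intro rtrancl_mono) blast
  have "finite (F \<union> r ` {..<N})" using \<open>finite F\<close> by simp
  then obtain x y where x: "x \<in> X" "x \<notin> F \<union> r ` {..<N}" and y: "y \<in> range r" "y \<notin> F \<union> r ` {..<N}"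
    and xy: "(x, y) \<in> (Restr G (- (F \<union> r ` {..<N})))\<^sup>*"
    by (rule reach_le_rtranclE[OF XR])
  obtain n where n: "y = r n" "N \<le> n" using y by (metis Un_iff imageI lessThan_iff not_le rangeE)
  have "finite (F \<union> r ` {..<n})" using \<open>finite F\<close> by simp
  then obtain y' z where y': "y' \<in> range r" "y' \<notin> F \<union> r ` {..<n}" and z: "z \<in> Z" "z \<notin> F \<union> r ` {..<n}"
    and y'z: "(y', z) \<in> (Restr G (- (F \<union> r ` {..<n})))\<^sup>*"
    by (rule reach_le_rtranclE[OF RZ])
  obtain m where m: "y' = r m" "n \<le> m" using y' by (metis Un_iff imageI lessThan_iff not_le rangeE)
  have "(r n, r m) \<in> (Restr G (- F))\<^sup>*"
    using n m N by (intro rtrancl_Restr_walk[where w=r, OF walk]) auto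
  moreover have "(x, r n) \<in> (Restr G (- F))\<^sup>*" "(r m, z) \<in> (Restr G (- F))\<^sup>*"
    using xy y'z mono n(1) m(1) by blast+
  ultimately have "(x, z) \<in> (Restr G (- F))\<^sup>*" by (meson rtrancl_trans)
  then show "\<exists>x\<in>X - F. \<exists>y\<in>Z - F. (x, y) \<in> (Restr G (- F))\<^sup>*" using x z by blast
qed

lemma is_antiray_iff_is_ray_converse: "is_antiray G r \<longleftrightarrow> is_ray (G\<inverse>) r"
  by (simp add: is_antiray_def is_ray_def)

lemma reach_le_trans:
  assumes "Y \<in> ray_sets G" "reach_le G X Y" "reach_le G Y Z"
  shows "reach_le G X Z"
proof -
  obtain r where Y: "Y = range r" and "is_ray G r \<or> is_ray (G\<inverse>) r"
    using assms(1) unfolding ray_sets_def is_antiray_iff_is_ray_converse by blast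
  then consider "is_ray G r" | "is_ray (G\<inverse>) r" by blast
  then show ?thesis
  proof cases
    case 1
    then show ?thesis using reach_le_trans_ray assms(2,3) unfolding Y by blast
  next
    case 2
    have "reach_le (G\<inverse>) Z (range r)" "reach_le (G\<inverse>) (range r) X"
      using assms(2,3) unfolding Y reach_le_converse by simp_all
    with 2 have "reach_le (G\<inverse>) Z X" by (rule reach_le_trans_ray)
    then show ?thesis unfolding reach_le_converse .
  qed
qed

lemma infinite_if_in_ray_sets: "Y \<in> ray_sets G \<Longrightarrow> infinite Y"
  unfolding ray_sets_def is_ray_def is_antiray_def by (auto simp: range_inj_infinite)

section \<open>Rays extracted from walks\<close>

text \<open>Jumping from each vertex to its last visit and then one step on turns a walk with finite
  fibres into a ray.\<close>
lemma ray_in_walk: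
  fixes w :: "nat \<Rightarrow> 'a"
  assumes walk: "\<And>j. (w j, w (Suc j)) \<in> G" and fibres: "\<And>x. finite {j. w j = x}"
  obtains i where "strict_mono i" "is_ray G (w \<circ> i)"
proof -
  define last_visit where "last_visit x = Max {j. w j = x}" for x
  have le_last_visit: "j \<le> last_visit (w j)" for j
    unfolding last_visit_def using fibres by (simp add: Max_ge)
  have w_last_visit: "w (last_visit (w j)) = w j" for j
    unfolding last_visit_def using fibres Max_in[of "{j'. w j' = w j}"] by auto
  define i where "i = rec_nat (last_visit (w 0)) (\<lambda>_ k. last_visit (w (Suc k)))"
  have i_0: "i 0 = last_visit (w 0)" and i_Suc: "i (Suc k) = last_visit (w (Suc (i k)))" for k
    by (simp_all add: i_def)
  have w_i_Suc: "w (i (Suc k)) = w (Suc (i k))" for k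
    using w_last_visit by (simp add: i_Suc)
  have i_last_visit: "i k = last_visit (w (i k))" for k
    by (cases k) (simp_all add: i_0 i_Suc w_last_visit)
  have "i k < i (Suc k)" for k
    using le_last_visit[of "Suc (i k)"] by (simp add: i_Suc)
  then have mono: "strict_mono i" by (simp add: strict_mono_Suc_iff)
  have "w (i a) \<noteq> w (i b)" if "a < b" for a b
  proof
    assume "w (i a) = w (i b)"
    then have "i b \<le> i a" using le_last_visit[of "i b"] i_last_visit[of a] by simp
    with strict_monoD[OF mono that] show False by simp
  qed
  then have "inj (w \<circ> i)" by (intro linorder_injI) simp
  moreover have "((w \<circ> i) k, (w \<circ> i) (Suc k)) \<in> G" for k
    using walk by (simp add: w_i_Suc)
  ultimately show thesis using that mono unfolding is_ray_def by blast
qed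

lemma ray_equivalent_to_walk:
  fixes w :: "nat \<Rightarrow> 'a"
  assumes walk: "\<And>j. (w j, w (Suc j)) \<in> G" and fibres: "\<And>x. finite {j. w j = x}"
    and "infinite I"
  shows "\<exists>r. is_ray G r \<and> reach_le G (w ` I) (range r) \<and> reach_le G (range r) (w ` I)"
proof -
  obtain i where "strict_mono i" "is_ray G (w \<circ> i)" by (rule ray_in_walk[OF walk fibres])
  moreover have "infinite (range i)"
    using \<open>strict_mono i\<close> by (simp add: range_inj_infinite strict_mono_imp_inj_on)
  moreover have "range (w \<circ> i) = w ` range i" by (rule image_comp[symmetric])
  ultimately show ?thesis
    using reach_le_walk[OF walk fibres \<open>infinite I\<close>] reach_le_walk[OF walk fibres _ \<open>infinite I\<close>]
    by auto
qed

text \<open>\<open>pos j\<close> is the position (block, index) of the \<open>j\<close>-th entry of the concatenation of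
  blocks of lengths \<open>l 0, l 1, \<dots>\<close>.\<close>
lemma enumerate_blocks:
  fixes l :: "nat \<Rightarrow> nat"
  assumes pos_l: "\<And>n. 0 < l n"
  obtains pos :: "nat \<Rightarrow> nat \<times> nat"
  where "inj pos" "\<And>j. snd (pos j) < l (fst (pos j))"
    and "\<And>j. pos (Suc j) = (if Suc (snd (pos j)) < l (fst (pos j))
                            then (fst (pos j), Suc (snd (pos j))) else (Suc (fst (pos j)), 0))"
    and "\<And>n. \<exists>j. pos j = (n, 0)"
proof -
  define pos where "pos = rec_nat (0, 0) (\<lambda>_ (n, k). if Suc k < l n then (n, Suc k) else (Suc n, 0))"
  have pos_0: "pos 0 = (0, 0)" by (simp add: pos_def)
  have pos_Suc: "pos (Suc j) = (if Suc (snd (pos j)) < l (fst (pos j))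
                   then (fst (pos j), Suc (snd (pos j))) else (Suc (fst (pos j)), 0))" for j
    by (simp add: pos_def split_beta)
  have in_block: "snd (pos j) < l (fst (pos j))" for j
    by (induction j) (simp_all add: pos_0 pos_l pos_Suc)
  have "(\<Sum>m<fst (pos j). l m) + snd (pos j) = j" for j
  proof (induction j)
    case (Suc j)
    then show ?case using in_block[of j] by (auto simp: pos_Suc)
  qed (simp add: pos_0)
  then have "inj pos" by (metis injI)
  moreover have "\<exists>j. pos j = (n, 0)" for n
  proof (induction n)
    case 0
    show ?case using pos_0 by blast
  next
    case (Suc n)
    then obtain j where j: "pos j = (n, 0)" by blast
    have run: "k < l n \<Longrightarrow> pos (j + k) = (n, k)" for k
      by (induction k) (simp_all add: j pos_Suc)
    have "pos (j + (l n - 1)) = (n, l n - 1)" by (rule run) (use pos_l[of n] in simp)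
    then have "pos (Suc (j + (l n - 1))) = (Suc n, 0)"
      unfolding pos_Suc[of "j + (l n - 1)"] using pos_l[of n] by simp
    then show ?case by blast
  qed
  ultimately show thesis using that in_block pos_Suc by blast
qed

lemma walk_through_blocks:
  fixes L :: "nat \<Rightarrow> 'a list"
  assumes ne: "\<And>n. L n \<noteq> []"
    and chain: "\<And>n. successively (\<lambda>x y. (x, y) \<in> D) (L n @ [hd (L (Suc n))])"
    and fin: "\<And>x. finite {n. x \<in> set (L n)}"
  obtains w :: "nat \<Rightarrow> 'a" and I
  where "\<And>j. (w j, w (Suc j)) \<in> D" "\<And>x. finite {j. w j = x}" "w ` I = range (\<lambda>n. hd (L n))"
proof -
  obtain pos where "inj pos" and in_block: "\<And>j. snd (pos j) < length (L (fst (pos j)))"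
    and pos_Suc: "\<And>j. pos (Suc j) = (if Suc (snd (pos j)) < length (L (fst (pos j)))
                   then (fst (pos j), Suc (snd (pos j))) else (Suc (fst (pos j)), 0))"
    and starts: "\<And>n. \<exists>j. pos j = (n, 0)"
    using enumerate_blocks[of "\<lambda>n. length (L n)"] ne by (metis length_greater_0_conv)
  define w where "w j = L (fst (pos j)) ! snd (pos j)" for j
  have "(w j, w (Suc j)) \<in> D" for j
  proof -
    obtain n k where nk: "pos j = (n, k)" by fastforce
    define M where "M = L n @ [hd (L (Suc n))]"
    have "k < length (L n)" using in_block[of j] nk by simp
    then have "(M ! k, M ! Suc k) \<in> D" using successively_nth[OF chain[of n], of k] unfolding M_def by simp
    moreover have "M ! k = w j" using \<open>k < length (L n)\<close> nk by (simp add: M_def w_def nth_append)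
    moreover have "M ! Suc k = w (Suc j)"
      using \<open>k < length (L n)\<close> nk ne[of "Suc n"]
      by (auto simp: M_def w_def pos_Suc nth_append hd_conv_nth not_less_eq)
    ultimately show ?thesis by simp
  qed
  moreover have "finite {j. w j = x}" for x
  proof -
    have "{j. w j = x} \<subseteq> pos -` (SIGMA n:{n. x \<in> set (L n)}. {..<length (L n)})"
    proof
      fix j assume "j \<in> {j. w j = x}"
      then have "x \<in> set (L (fst (pos j)))" using in_block[of j] by (auto simp: w_def)
      then show "j \<in> pos -` (SIGMA n:{n. x \<in> set (L n)}. {..<length (L n)})"
        using in_block[of j] by (cases "pos j") auto
    qed
    moreover have "finite (SIGMA n:{n. x \<in> set (L n)}. {..<length (L n)})" using fin by blast
    ultimately show ?thesis using \<open>inj pos\<close> by (meson finite_subset finite_vimageI)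
  qed
  moreover have "w ` {j. snd (pos j) = 0} = range (\<lambda>n. hd (L n))"
  proof -
    have "w j = hd (L (fst (pos j)))" if "snd (pos j) = 0" for j
      using that ne by (simp add: w_def hd_conv_nth)
    moreover have "hd (L n) \<in> w ` {j. snd (pos j) = 0}" for n
    proof -
      obtain j where "pos j = (n, 0)" using starts by blast
      then show ?thesis using ne[of n] by (intro image_eqI[of _ _ j]) (simp_all add: w_def hd_conv_nth)
    qed
    ultimately show ?thesis by auto
  qed
  ultimately show thesis using that by blast
qed

lemma ray_through_blocks:
  fixes L :: "nat \<Rightarrow> 'a list"
  assumes "\<And>n. L n \<noteq> []"
    and "\<And>n. successively (\<lambda>x y. (x, y) \<in> D) (L n @ [hd (L (Suc n))])"
    and "\<And>x. finite {n. x \<in> set (L n)}"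
    and "inj (\<lambda>n. hd (L n))"
  shows "\<exists>r. is_ray D r \<and> reach_le D (range (\<lambda>n. hd (L n))) (range r)
              \<and> reach_le D (range r) (range (\<lambda>n. hd (L n)))"
proof -
  obtain w :: "nat \<Rightarrow> 'a" and I where walk: "\<And>j. (w j, w (Suc j)) \<in> D"
    and fibres: "\<And>x. finite {j. w j = x}" and I: "w ` I = range (\<lambda>n. hd (L n))"
    by (rule walk_through_blocks[OF assms(1-3)]) blast
  have "infinite (range (\<lambda>n. hd (L n)))" using assms(4) by (rule range_inj_infinite)
  then have "infinite I" using I by (metis finite_imageI)
  from ray_equivalent_to_walk[OF walk fibres this] show ?thesis unfolding I .
qed

section \<open>Changing the generating set\<close>

primrec word_walk :: "'a::semigroup_mult \<Rightarrow> 'a list \<Rightarrow> 'a list" where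
  "word_walk v [] = [v]"
| "word_walk v (b # bs) = v # word_walk (v * b) bs"

lemma word_walk_not_Nil [simp]: "word_walk v ws \<noteq> []"
  by (cases ws) simp_all

lemma hd_word_walk [simp]: "hd (word_walk v ws) = v"
  by (cases ws) simp_all

lemma last_word_walk [simp]: "last (word_walk v ws) = foldl (*) v ws"
  by (induction ws arbitrary: v) simp_all

lemma successively_word_walk:
  "set ws \<subseteq> B \<Longrightarrow> successively (\<lambda>x y. (x, y) \<in> cayley_r B) (word_walk v ws)"
  by (induction ws arbitrary: v) (auto simp: successively_Cons cayley_r_def)

lemma word_walk_reaches_end:
  "x \<in> set (word_walk v ws) \<Longrightarrow> \<exists>s. suffix s ws \<and> foldl (*) x s = foldl (*) v ws"
  by (induction ws arbitrary: v) (auto intro: suffix_ConsI)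

lemma sgen_word:
  "x \<in> sgen B \<Longrightarrow> \<exists>ws. ws \<noteq> [] \<and> set ws \<subseteq> B \<and> (\<forall>v. foldl (*) v ws = v * x)"
proof (induction rule: sgen.induct)
  case (base a)
  show ?case by (intro exI[of _ "[a]"]) (simp add: base)
next
  case (mult x y)
  then obtain xs ys where "xs \<noteq> []" "set xs \<subseteq> B" "\<forall>v. foldl (*) v xs = v * x"
    "set ys \<subseteq> B" "\<forall>v. foldl (*) v ys = v * y" by blast
  then show ?case by (intro exI[of _ "xs @ ys"]) (simp add: mult.assoc)
qed

lemma words_for_generators:
  fixes A B :: "'a::semigroup_mult set"
  assumes "A \<subseteq> sgen B"
  obtains W where "\<And>a. a \<in> A \<Longrightarrow> W a \<noteq> [] \<and> set (W a) \<subseteq> B \<and> (\<forall>v. foldl (*) v (W a) = v * a)"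
proof -
  have "\<forall>a\<in>A. \<exists>ws. ws \<noteq> [] \<and> set ws \<subseteq> B \<and> (\<forall>v. foldl (*) v ws = v * a)"
    using assms sgen_word by blast
  then show thesis using that by (metis bchoice)
qed

lemma finite_word_walk_visits:
  fixes u t :: "nat \<Rightarrow> 'a::semigroup_mult"
  assumes "inj t" "finite Ws" "\<And>n. ws n \<in> Ws" "\<And>n. foldl (*) (u n) (ws n) = t n"
  shows "finite {n. x \<in> set (word_walk (u n) (ws n))}"
proof (rule finite_subset)
  show "{n. x \<in> set (word_walk (u n) (ws n))} \<subseteq> (\<Union>w\<in>Ws. \<Union>s\<in>set (suffixes w). {n. t n = foldl (*) x s})"
  proof
    fix n assume "n \<in> {n. x \<in> set (word_walk (u n) (ws n))}"
    then obtain s where "suffix s (ws n)" "foldl (*) x s = t n"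
      using word_walk_reaches_end assms(4) by fastforce
    then show "n \<in> (\<Union>w\<in>Ws. \<Union>s\<in>set (suffixes w). {n. t n = foldl (*) x s})"
      using assms(3) by (intro UN_I[of "ws n"] UN_I[of s]) simp_all
  qed
  show "finite (\<Union>w\<in>Ws. \<Union>s\<in>set (suffixes w). {n. t n = foldl (*) x s})"
    by (intro finite_UN_I assms(2) finite_set finite_fibres_if_inj assms(1))
qed

text \<open>Each edge \<open>(u, u * a)\<close> of the first graph is replaced by the walk spelling a word for
  \<open>a\<close>; this walk can only meet \<open>F\<close> if \<open>u * a\<close> lies in the finite set \<open>F'\<close> below.\<close>
lemma reach_le_cayley_generators:
  fixes A B :: "'a::semigroup_mult set"
  assumes "finite A" "A \<subseteq> sgen B" "reach_le (cayley_r A) X Y"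
  shows "reach_le (cayley_r B) X Y"
  unfolding reach_le_iff_rtrancl
proof (intro allI impI)
  fix F :: "'a set" assume "finite F"
  obtain W where W: "\<And>a. a \<in> A \<Longrightarrow> W a \<noteq> [] \<and> set (W a) \<subseteq> B \<and> (\<forall>v. foldl (*) v (W a) = v * a)"
    using words_for_generators[OF assms(2)] by blast
  define F' where "F' = F \<union> (\<Union>a\<in>A. \<Union>s\<in>set (suffixes (W a)). (\<lambda>f. foldl (*) f s) ` F)"
  have "finite F'" unfolding F'_def using \<open>finite F\<close> assms(1) by simp
  have "Restr (cayley_r A) (- F') \<subseteq> (Restr (cayley_r B) (- F))\<^sup>*"
  proof (rule subrelI)
    fix u v assume uv: "(u, v) \<in> Restr (cayley_r A) (- F')"
    then obtain a where a: "a \<in> A" "v = u * a" by (auto simp: cayley_r_def)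
    have "set (word_walk u (W a)) \<subseteq> - F"
    proof
      fix x assume "x \<in> set (word_walk u (W a))"
      then obtain s where s: "suffix s (W a)" "foldl (*) x s = foldl (*) u (W a)"
        using word_walk_reaches_end by blast
      have "v \<in> F'" if "x \<in> F"
        unfolding F'_def using a s W[OF a(1)] that
        by (intro UnI2 UN_I[of a] UN_I[of s] image_eqI[of _ _ x]) simp_all
      then show "x \<in> - F" using uv by blast
    qed
    then have "(hd (word_walk u (W a)), last (word_walk u (W a))) \<in> (Restr (cayley_r B) (- F))\<^sup>*"
      using W[OF a(1)] by (intro rtrancl_Restr_if_successively successively_word_walk) simp_all
    then show "(u, v) \<in> (Restr (cayley_r B) (- F))\<^sup>*" using W[OF a(1)] a(2) by simp
  qed
  then have sub: "(Restr (cayley_r A) (- F'))\<^sup>* \<subseteq> (Restr (cayley_r B) (- F))\<^sup>*"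
    by (rule rtrancl_subset_rtrancl)
  obtain x y where "x \<in> X" "x \<notin> F'" "y \<in> Y" "y \<notin> F'" "(x, y) \<in> (Restr (cayley_r A) (- F'))\<^sup>*"
    by (rule reach_le_rtranclE[OF assms(3) \<open>finite F'\<close>])
  moreover have "F \<subseteq> F'" unfolding F'_def by blast
  ultimately show "\<exists>x\<in>X - F. \<exists>y\<in>Y - F. (x, y) \<in> (Restr (cayley_r B) (- F))\<^sup>*"
    using sub by (intro bexI[of _ x] bexI[of _ y]) auto
qed

lemma cayley_ray_equivalent:
  fixes A B :: "'a::semigroup_mult set"
  assumes "finite A" "A \<subseteq> sgen B" "is_ray (cayley_r A) r"
  shows "\<exists>y. is_ray (cayley_r B) y \<and> end_equiv (cayley_r B) (range r) (range y)"
proof -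
  obtain W where W: "\<And>a. a \<in> A \<Longrightarrow> W a \<noteq> [] \<and> set (W a) \<subseteq> B \<and> (\<forall>v. foldl (*) v (W a) = v * a)"
    using words_for_generators[OF assms(2)] by blast
  have "\<forall>n. \<exists>a. a \<in> A \<and> r (Suc n) = r n * a"
    using assms(3) unfolding is_ray_def cayley_r_def by blast
  then obtain a where a: "\<And>n. a n \<in> A" "\<And>n. r (Suc n) = r n * a n" by metis
  define P where "P n = word_walk (r n) (W (a n))" for n
  define L where "L n = butlast (P n)" for n
  have P: "\<And>n. W (a n) \<noteq> []" "\<And>n. set (W (a n)) \<subseteq> B" "\<And>n. last (P n) = r (Suc n)"
    using W a by (simp_all add: P_def)
  have hd_L: "hd (L n) = r n" for n
    using P(1)[of n] by (cases "W (a n)") (simp_all add: L_def P_def)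
  have "L n \<noteq> []" for n
    using P(1)[of n] by (cases "W (a n)") (simp_all add: L_def P_def)
  moreover have "successively (\<lambda>x y. (x, y) \<in> cayley_r B) (L n @ [hd (L (Suc n))])" for n
    using successively_word_walk[OF P(2)] P(3)[of n] hd_L[of "Suc n"]
    by (metis L_def P_def append_butlast_last_id word_walk_not_Nil)
  moreover have "finite {n. x \<in> set (L n)}" for x
  proof (rule finite_subset)
    show "{n. x \<in> set (L n)} \<subseteq> {n. x \<in> set (P n)}" by (auto simp: L_def dest: in_set_butlastD)
    have "inj (\<lambda>n. r (Suc n))" using assms(3) by (auto simp: is_ray_def inj_def)
    then show "finite {n. x \<in> set (P n)}" unfolding P_def
      using W a assms(1) by (intro finite_word_walk_visits[where Ws="W ` A"]) simp_all
  qed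
  moreover have "inj (\<lambda>n. hd (L n))" using assms(3) by (simp add: hd_L is_ray_def)
  ultimately show ?thesis
    using ray_through_blocks[of L "cayley_r B"] unfolding hd_L end_equiv_def by auto
qed

lemma cayley_antiray_equivalent:
  fixes A B :: "'a::semigroup_mult set"
  assumes "finite A" "A \<subseteq> sgen B" "is_antiray (cayley_r A) r"
  shows "\<exists>y. is_antiray (cayley_r B) y \<and> end_equiv (cayley_r B) (range r) (range y)"
proof -
  obtain W where W: "\<And>a. a \<in> A \<Longrightarrow> W a \<noteq> [] \<and> set (W a) \<subseteq> B \<and> (\<forall>v. foldl (*) v (W a) = v * a)"
    using words_for_generators[OF assms(2)] by blast
  have "\<forall>n. \<exists>a. a \<in> A \<and> r n = r (Suc n) * a"
    using assms(3) unfolding is_antiray_def cayley_r_def by blast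
  then obtain a where a_in: "\<And>n. a n \<in> A" and a_step: "\<And>n. r n = r (Suc n) * a n" by metis
  \<comment> \<open>oriented this way, the equations can be used by the simplifier without looping\<close>
  have a: "\<And>n. a n \<in> A" "\<And>n. r (Suc n) * a n = r n" using a_in a_step[symmetric] .
  define P where "P n = word_walk (r (Suc n)) (W (a n))" for n
  define L where "L n = rev (tl (P n))" for n
  have P: "\<And>n. W (a n) \<noteq> []" "\<And>n. set (W (a n)) \<subseteq> B" "\<And>n. last (P n) = r n"
    using W a by (simp_all add: P_def)
  have "tl (P n) \<noteq> []" for n
    using P(1)[of n] by (cases "W (a n)") (simp_all add: P_def)
  then have L_not_Nil: "L n \<noteq> []" and hd_L: "hd (L n) = r n" for n
    using P(3)[of n] by (simp_all add: L_def hd_rev last_tl)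
  have "L n @ [hd (L (Suc n))] = rev (P n)" for n
  proof -
    have "P n = r (Suc n) # tl (P n)" by (metis P_def hd_word_walk list.collapse word_walk_not_Nil)
    then show ?thesis unfolding hd_L unfolding L_def by (metis rev.simps(2))
  qed
  then have "successively (\<lambda>x y. (x, y) \<in> (cayley_r B)\<inverse>) (L n @ [hd (L (Suc n))])" for n
    using successively_word_walk[OF P(2)] by (simp add: P_def)
  moreover have "finite {n. x \<in> set (L n)}" for x
  proof (rule finite_subset)
    show "{n. x \<in> set (L n)} \<subseteq> {n. x \<in> set (P n)}"
      by (auto simp: L_def P_def intro: list.set_sel(2)[OF word_walk_not_Nil])
    have "inj r" using assms(3) by (simp add: is_antiray_def)
    then show "finite {n. x \<in> set (P n)}" unfolding P_def
      using W a assms(1) by (intro finite_word_walk_visits[where Ws="W ` A"]) simp_all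
  qed
  moreover have "inj (\<lambda>n. hd (L n))" using assms(3) by (simp add: hd_L is_antiray_def)
  ultimately obtain y where "is_ray ((cayley_r B)\<inverse>) y"
    "reach_le ((cayley_r B)\<inverse>) (range r) (range y)" "reach_le ((cayley_r B)\<inverse>) (range y) (range r)"
    using ray_through_blocks[of L "(cayley_r B)\<inverse>"] L_not_Nil unfolding hd_L by blast
  then show ?thesis
    unfolding is_antiray_iff_is_ray_converse end_equiv_def reach_le_converse by blast
qed

lemma ray_sets_cayley_equivalent:
  fixes A B :: "'a::semigroup_mult set"
  assumes "finite A" "A \<subseteq> sgen B" "X \<in> ray_sets (cayley_r A)"
  shows "\<exists>Y\<in>ray_sets (cayley_r B). end_equiv (cayley_r B) X Y"
proof -
  obtain r where X: "X = range r" and "is_ray (cayley_r A) r \<or> is_antiray (cayley_r A) r"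
    using assms(3) unfolding ray_sets_def by blast
  then obtain y where "is_ray (cayley_r B) y \<or> is_antiray (cayley_r B) y"
    and "end_equiv (cayley_r B) X (range y)"
    using cayley_ray_equivalent[OF assms(1,2)] cayley_antiray_equivalent[OF assms(1,2)] by blast
  then show ?thesis unfolding ray_sets_def by blast
qed

section \<open>Ends as a quotient poset\<close>

definition sym_class :: "('a \<Rightarrow> 'a \<Rightarrow> bool) \<Rightarrow> 'a set \<Rightarrow> 'a \<Rightarrow> 'a set" where
  "sym_class R S X = {Y \<in> S. R X Y \<and> R Y X}"

context
  fixes R :: "'a \<Rightarrow> 'a \<Rightarrow> bool" and U :: "'a set"
  assumes R_refl: "\<And>X. X \<in> U \<Longrightarrow> R X X"
    and R_trans: "\<And>X Y Z. Y \<in> U \<Longrightarrow> R X Y \<Longrightarrow> R Y Z \<Longrightarrow> R X Z"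
begin

lemma mem_sym_class_self: "X \<in> S \<Longrightarrow> S \<subseteq> U \<Longrightarrow> X \<in> sym_class R S X"
  using R_refl unfolding sym_class_def by blast

lemma sym_class_eq:
  assumes "T \<subseteq> U" "X \<in> U" "Y \<in> sym_class R T X"
  shows "sym_class R S Y = sym_class R S X"
proof -
  have "Y \<in> U" "R X Y" "R Y X" using assms unfolding sym_class_def by blast+
  then show ?thesis unfolding sym_class_def using assms(2) R_trans by blast
qed

lemma UN_sym_class:
  assumes "P \<subseteq> U" "X \<in> P"
  shows "(\<Union>Y\<in>sym_class R P X. sym_class R Q Y) = sym_class R Q X"
  using assms sym_class_eq[of P X] mem_sym_class_self[of X P] by blast

lemma sym_class_le_iff:
  assumes "S \<subseteq> U" "X \<in> U" "X' \<in> U" "sym_class R S X \<noteq> {}" "sym_class R S X' \<noteq> {}"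
  shows "(\<exists>Y\<in>sym_class R S X. \<exists>Y'\<in>sym_class R S X'. R Y Y') \<longleftrightarrow> R X X'"
proof
  assume "\<exists>Y\<in>sym_class R S X. \<exists>Y'\<in>sym_class R S X'. R Y Y'"
  then obtain Y Y' where "Y \<in> S" "Y' \<in> S" "R X Y" "R Y Y'" "R Y' X'"
    unfolding sym_class_def by blast
  then show "R X X'" using assms(1) R_trans by blast
next
  assume "R X X'"
  obtain Y Y' where "Y \<in> sym_class R S X" "Y' \<in> sym_class R S X'" using assms(4,5) by blast
  moreover from this have "R Y Y'"
    using \<open>R X X'\<close> assms(2,3) R_trans unfolding sym_class_def by blast
  ultimately show "\<exists>Y\<in>sym_class R S X. \<exists>Y'\<in>sym_class R S X'. R Y Y'" by blast
qed

context
  fixes P Q :: "'a set"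
  assumes PQ_sub: "P \<subseteq> U" "Q \<subseteq> U"
    and PQ: "\<And>X. X \<in> P \<Longrightarrow> sym_class R Q X \<noteq> {}"
    and QP: "\<And>Y. Y \<in> Q \<Longrightarrow> sym_class R P Y \<noteq> {}"
begin

lemma bij_betw_sym_classes:
  "bij_betw (\<lambda>E. \<Union>Y\<in>E. sym_class R Q Y) (sym_class R P ` P) (sym_class R Q ` Q)"
proof (rule bij_betw_imageI)
  show "inj_on (\<lambda>E. \<Union>Y\<in>E. sym_class R Q Y) (sym_class R P ` P)"
  proof (rule inj_onI)
    fix E E' assume "E \<in> sym_class R P ` P" "E' \<in> sym_class R P ` P"
      and images: "(\<Union>Y\<in>E. sym_class R Q Y) = (\<Union>Y\<in>E'. sym_class R Q Y)"
    then obtain X X' where X: "X \<in> P" "X' \<in> P" and E: "E = sym_class R P X" "E' = sym_class R P X'"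
      by blast
    then have classes: "sym_class R Q X = sym_class R Q X'" using images PQ_sub UN_sym_class by simp
    obtain Y where "Y \<in> sym_class R Q X" using PQ[OF X(1)] by blast
    then have "sym_class R P Y = sym_class R P X" "sym_class R P Y = sym_class R P X'"
      using X PQ_sub classes sym_class_eq by (metis subsetD)+
    then show "E = E'" using E by simp
  qed
  show "(\<lambda>E. \<Union>Y\<in>E. sym_class R Q Y) ` sym_class R P ` P = sym_class R Q ` Q"
  proof (intro equalityI subsetI)
    fix F assume "F \<in> (\<lambda>E. \<Union>Y\<in>E. sym_class R Q Y) ` sym_class R P ` P"
    then obtain X where X: "X \<in> P" "F = sym_class R Q X" using PQ_sub UN_sym_class by auto
    moreover obtain Y where "Y \<in> sym_class R Q X" using PQ[OF X(1)] by blast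
    moreover from this have "Y \<in> Q" by (simp add: sym_class_def)
    ultimately show "F \<in> sym_class R Q ` Q" using PQ_sub sym_class_eq by (metis image_eqI subsetD)
  next
    fix F assume "F \<in> sym_class R Q ` Q"
    then obtain Y where Y: "Y \<in> Q" "F = sym_class R Q Y" by blast
    moreover obtain X where "X \<in> sym_class R P Y" using QP[OF Y(1)] by blast
    moreover from this have "X \<in> P" by (simp add: sym_class_def)
    ultimately have "F = (\<Union>Y\<in>sym_class R P X. sym_class R Q Y)"
      using PQ_sub sym_class_eq UN_sym_class by (metis subsetD)
    then show "F \<in> (\<lambda>E. \<Union>Y\<in>E. sym_class R Q Y) ` sym_class R P ` P" using \<open>X \<in> P\<close> by blast
  qed
qed

lemma sym_class_le_iff_transfer:
  assumes "X \<in> P" "X' \<in> P"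
  shows "(\<exists>Y\<in>sym_class R P X. \<exists>Y'\<in>sym_class R P X'. R Y Y')
      \<longleftrightarrow> (\<exists>Y\<in>sym_class R Q X. \<exists>Y'\<in>sym_class R Q X'. R Y Y')"
proof -
  have "(\<exists>Y\<in>sym_class R P X. \<exists>Y'\<in>sym_class R P X'. R Y Y') \<longleftrightarrow> R X X'"
    using assms PQ_sub mem_sym_class_self[of _ P] by (intro sym_class_le_iff) auto
  moreover have "(\<exists>Y\<in>sym_class R Q X. \<exists>Y'\<in>sym_class R Q X'. R Y Y') \<longleftrightarrow> R X X'"
    using assms PQ_sub PQ by (intro sym_class_le_iff) auto
  ultimately show ?thesis by simp
qed

lemma sym_classes_iso:
  "\<exists>f. bij_betw f (sym_class R P ` P) (sym_class R Q ` Q) \<and>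
     (\<forall>E\<in>sym_class R P ` P. \<forall>F\<in>sym_class R P ` P.
        (\<exists>X\<in>E. \<exists>Y\<in>F. R X Y) \<longleftrightarrow> (\<exists>X\<in>f E. \<exists>Y\<in>f F. R X Y))"
proof (intro exI conjI ballI)
  show "bij_betw (\<lambda>E. \<Union>Y\<in>E. sym_class R Q Y) (sym_class R P ` P) (sym_class R Q ` Q)"
    by (rule bij_betw_sym_classes)
  fix E F assume "E \<in> sym_class R P ` P" "F \<in> sym_class R P ` P"
  then obtain X X' where "X \<in> P" "X' \<in> P" "E = sym_class R P X" "F = sym_class R P X'" by blast
  then show "(\<exists>X\<in>E. \<exists>Y\<in>F. R X Y) \<longleftrightarrow>
      (\<exists>X\<in>\<Union>Y\<in>E. sym_class R Q Y. \<exists>Y\<in>\<Union>Y\<in>F. sym_class R Q Y. R X Y)"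
    using sym_class_le_iff_transfer PQ_sub UN_sym_class by simp
qed

end

end

lemma end_poset_iso_if_equivalent_rays:
  assumes eq: "reach_le G = reach_le H"
    and GH: "\<And>X. X \<in> ray_sets G \<Longrightarrow> \<exists>Y\<in>ray_sets H. end_equiv H X Y"
    and HG: "\<And>Y. Y \<in> ray_sets H \<Longrightarrow> \<exists>X\<in>ray_sets G. end_equiv G Y X"
  shows "end_poset_iso G H"
proof -
  let ?U = "ray_sets G \<union> ray_sets H"
  have reach_le_refl_on: "reach_le H X X" if "X \<in> ?U" for X
    using that infinite_if_in_ray_sets reach_le_refl by blast
  have reach_le_trans_on: "reach_le H X Z" if "Y \<in> ?U" "reach_le H X Y" "reach_le H Y Z" for X Y Z
    using that reach_le_trans[of Y G X Z] reach_le_trans[of Y H X Z] eq by auto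
  have ends: "ends K = sym_class (reach_le H) (ray_sets K) ` ray_sets K" if "K = G \<or> K = H" for K
    using that eq unfolding ends_def end_equiv_def sym_class_def by auto
  have "end_le K E F \<longleftrightarrow> (\<exists>X\<in>E. \<exists>Y\<in>F. reach_le H X Y)" if "K = G \<or> K = H" for K E F
    using that unfolding end_le_def by (elim disjE) (simp_all add: eq)
  moreover have "\<exists>f. bij_betw f (ends G) (ends H) \<and>
           (\<forall>E\<in>ends G. \<forall>F\<in>ends G. (\<exists>X\<in>E. \<exists>Y\<in>F. reach_le H X Y) \<longleftrightarrow> (\<exists>X\<in>f E. \<exists>Y\<in>f F. reach_le H X Y))"
    unfolding ends[of G, simplified] ends[of H, simplified]
  proof (rule sym_classes_iso[where U = ?U, OF reach_le_refl_on reach_le_trans_on])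
    show "sym_class (reach_le H) (ray_sets H) X \<noteq> {}" if "X \<in> ray_sets G" for X
      using GH[OF that] unfolding sym_class_def end_equiv_def by blast
    show "sym_class (reach_le H) (ray_sets G) Y \<noteq> {}" if "Y \<in> ray_sets H" for Y
      using HG[OF that] eq unfolding sym_class_def end_equiv_def by auto
  qed auto
  ultimately show ?thesis unfolding end_poset_iso_def by auto
qed

theorem mainTheorem6:
  fixes A B :: "'a::semigroup_mult set"
  assumes "finite A" and "sgen A = UNIV"
      and "finite B" and "sgen B = UNIV"
  shows "end_poset_iso (cayley_r A) (cayley_r B)"
proof -
  have "A \<subseteq> sgen B" "B \<subseteq> sgen A" using assms(2,4) by simp_all
  then have "reach_le (cayley_r A) = reach_le (cayley_r B)"
    using assms(1,3) reach_le_cayley_generators by (intro ext iffI) blast+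
  then show ?thesis
    using ray_sets_cayley_equivalent \<open>A \<subseteq> sgen B\<close> \<open>B \<subseteq> sgen A\<close> assms(1,3)
    by (intro end_poset_iso_if_equivalent_rays) blast+
qed

end
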